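(* Let $\lambda$ be a partition of $n$, let $t=\lambda_2-1$ and $s=\lambda_1-1$, and for $1\le k\le t$ let $b_k=\lambda'_1+\cdots+\lambda'_k-k+1$ (the entry in the top cell of column $k$ of the regular filling). Then $\mathcal{I}_\lambda$ is generated by the union of the following sets: (column 0) $e_1(n),\dots,e_{\ell(\lambda)-1}(n)$ (here $\ell(\lambda)=\lambda'_1=b_1$); (column $k$, for each $1\le k\le t$) $e_{b_k}(n-k)$; (last column, only if $s>t$) $e_{n-s}(n-s)$, i.e. all square-free monomials of degree $n-s$. Moreover, the same remains a generating set if the set $e_{b_1}(n-1)$ is replaced by $\{x_1^{b_1},\dots,x_n^{b_1}\}$. If $\lambda=(1^n)$ is the one-column partition, one also adds the element $e_n(n)=x_1\cdots x_n$ to this generating set; if $\lambda=(n)$ is the one-row partition, $\mathcal{I}_{(n)}=(x_1,\dots,x_n)$.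
   Context: $k$ is a field of characteristic $0$ and $R=k[x_1,\dots,x_n]$. For a set $S$ of variables, $e_r(S)$ is the $r$-th elementary symmetric polynomial in the variables of $S$ ($e_0=1$, and $e_r(S)=0$ if $r>|S|$). For $1\le m\le n$, $e_r(m)$ denotes the set $\{e_r(S): S\subseteq\{x_1,\dots,x_n\},\ |S|=m\}$. A partition $\lambda=(\lambda_1\ge\lambda_2\ge\cdots)$ of $n$ (with $\lambda_i=0$ beyond its length) has length $\ell(\lambda)$ and conjugate $\lambda'$ with $\lambda'_i=\#\{j:\lambda_j\ge i\}$. The Young diagram of $\lambda$ is drawn with rows counted from the bottom (bottom row of length $\lambda_1$), left-justified; columns are numbered $0,1,\dots,\lambda_1-1$ from left to right, column $c$ having height $\lambda'_{c+1}$. For $1\le m\le n$ put $\delta_m(\lambda)=\lambda'_n+\cdots+\lambda'_{n-m+1}$ (with $\lambda'_i=0$ for $i>\lambda_1$). The De Concini–Procesi ideal $\mathcal{I}_\lambda\subseteq R$ is the ideal generated by all elements of the sets $e_r(m)$ with $1\le m\le n$ and $m\ge r>m-\delta_m(\lambda)$. The regular filling of $\lambda$: for each column $c$, the bottom cell of column $c$ receives $n-c$, and the remaining $\lambda'_{c+1}-1$ cells of column $c$ receive, from top to bottom, the consecutive integers $1+\sum_{d<c}(\lambda'_{d+1}-1),\dots,\sum_{d\le c}(\lambda'_{d+1}-1)$. *)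

theory Defs
  imports Main "HOL-Library.Poly_Mapping"
begin

text \<open>Multivariate polynomials over a coefficient ring: finitely supported maps from
  monomials (finitely supported exponent vectors, variables indexed by nat) to coefficients.\<close>
type_synonym 'a mpoly = "(nat \<Rightarrow>\<^sub>0 nat) \<Rightarrow>\<^sub>0 'a"

definition Var :: "nat \<Rightarrow> 'a::comm_ring_1 mpoly" where
  "Var i = Poly_Mapping.single (Poly_Mapping.single i 1) 1"

definition in_R :: "nat \<Rightarrow> 'a::comm_ring_1 mpoly \<Rightarrow> bool" where
  "in_R n p \<longleftrightarrow> (\<forall>m \<in> Poly_Mapping.keys p. Poly_Mapping.keys m \<subseteq> {1..n})"

definition ideal_R :: "nat \<Rightarrow> 'a::comm_ring_1 mpoly set \<Rightarrow> 'a mpoly set" where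
  "ideal_R n G = {p. \<exists>S c. finite S \<and> S \<subseteq> G \<and> (\<forall>g\<in>S. in_R n (c g)) \<and> p = (\<Sum>g\<in>S. c g * g)}"

definition esym :: "nat \<Rightarrow> nat set \<Rightarrow> 'a::comm_ring_1 mpoly" where
  "esym r S = (\<Sum>T\<in>{T. T \<subseteq> S \<and> card T = r}. \<Prod>i\<in>T. Var i)"

text \<open>The set e_r(m) = { e_r(S) : S \<subseteq> {x_1..x_n}, |S| = m }.\<close>
definition esyms :: "nat \<Rightarrow> nat \<Rightarrow> nat \<Rightarrow> 'a::comm_ring_1 mpoly set" where
  "esyms n r m = {esym r S | S. S \<subseteq> {1..n} \<and> card S = m}"

definition is_partition :: "nat list \<Rightarrow> nat \<Rightarrow> bool" where
  "is_partition lam n \<longleftrightarrow> sorted_wrt (\<ge>) lam \<and> (\<forall>x\<in>set lam. 0 < x) \<and> sum_list lam = n"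

text \<open>lambda_i (1-indexed), 0 beyond the length.\<close>
definition part :: "nat list \<Rightarrow> nat \<Rightarrow> nat" where
  "part lam i = (if 1 \<le> i \<and> i \<le> length lam then lam ! (i - 1) else 0)"

definition conj :: "nat list \<Rightarrow> nat \<Rightarrow> nat" where
  "conj lam i = card {j. 1 \<le> j \<and> part lam j \<ge> i}"

definition delta :: "nat list \<Rightarrow> nat \<Rightarrow> nat \<Rightarrow> nat" where
  "delta lam n m = (\<Sum>i\<in>{n - m + 1..n}. conj lam i)"

definition DCP_ideal :: "nat list \<Rightarrow> nat \<Rightarrow> 'a::comm_ring_1 mpoly set" where
  "DCP_ideal lam n = ideal_R n (\<Union>m\<in>{1..n}. \<Union>r\<in>{r. r \<le> m \<and> m < r + delta lam n m}. esyms n r m)"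

definition bcol :: "nat list \<Rightarrow> nat \<Rightarrow> nat" where
  "bcol lam k = (\<Sum>i\<in>{1..k}. conj lam i) + 1 - k"

definition gens_col0 :: "nat list \<Rightarrow> nat \<Rightarrow> 'a::comm_ring_1 mpoly set" where
  "gens_col0 lam n = (\<Union>r\<in>{1..<length lam}. esyms n r n)"

text \<open>Generators from columns k = 1..t with t = lambda_2 - 1 (no such columns if lambda_2 \<le> 1).\<close>
definition gens_cols :: "nat list \<Rightarrow> nat \<Rightarrow> nat \<Rightarrow> 'a::comm_ring_1 mpoly set" where
  "gens_cols lam n k0 = (\<Union>k\<in>{k0..<part lam 2}. esyms n (bcol lam k) (n - k))"

text \<open>Last column, only when s = lambda_1 - 1 > t = lambda_2 - 1, i.e. lambda_1 > lambda_2.\<close>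
definition gens_last :: "nat list \<Rightarrow> nat \<Rightarrow> 'a::comm_ring_1 mpoly set" where
  "gens_last lam n = (if part lam 1 > part lam 2
     then esyms n (n - (part lam 1 - 1)) (n - (part lam 1 - 1)) else {})"

end

theory Submission
  imports Defs
begin

text \<open>
  Two identities drive the proof: e_(r+1)(S) = e_(r+1)(S - x) + x e_r(S - x) and
  sum over x in S of x e_r(S - x) = (r + 1) e_(r+1)(S). With them, and division by positive
  integers, an ideal containing every e_r(S) with |S| = m < n contains every e_r'(S') with
  r' \<ge> r and m \<le> |S'| \<le> n. Writing m = n - k, the De Concini--Procesi condition
  m < r + delta_m says exactly r \<ge> b_k, so column k of the regular filling contributes the sets
  e_r(n - k), r \<ge> b_k, all generated by e_(b_k)(n - k). The columns of height one beyond
  lambda_2 are dominated by the last column, and the degrees r \<ge> l(lambda) of column 0 by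
  column 1. Finally, modulo e_1(n), ..., e_r(n) one has e_r({x_1, ..., x_n} - x) congruent to (-x)^r, which
  trades e_(b_1)(n - 1) for the powers x_i^(b_1).
\<close>

section \<open>The polynomial ring \<open>R\<close> and its ideals\<close>

lemma in_R_const: "in_R n (Poly_Mapping.single 0 c)"
  by (simp add: in_R_def)

lemma in_R_1 [simp]: "in_R n (1 :: 'a::comm_ring_1 mpoly)"
  by (simp add: in_R_def)

lemma in_R_of_nat: "in_R n (of_nat k :: 'a::comm_ring_1 mpoly)"
  by (metis in_R_const single_of_nat)

lemma in_R_uminus: "in_R n p \<Longrightarrow> in_R n (- p)"
  by (simp add: in_R_def)

lemma in_R_add: "in_R n p \<Longrightarrow> in_R n q \<Longrightarrow> in_R n (p + q)"
  unfolding in_R_def using keys_add[of p q] by blast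

lemma in_R_mult: "in_R n p \<Longrightarrow> in_R n q \<Longrightarrow> in_R n (p * q)"
  unfolding in_R_def
proof
  fix m assume p: "\<forall>m\<in>Poly_Mapping.keys p. Poly_Mapping.keys m \<subseteq> {1..n}"
    and q: "\<forall>m\<in>Poly_Mapping.keys q. Poly_Mapping.keys m \<subseteq> {1..n}"
    and "m \<in> Poly_Mapping.keys (p * q)"
  then obtain a b where "m = a + b" "a \<in> Poly_Mapping.keys p" "b \<in> Poly_Mapping.keys q"
    using keys_mult by blast
  then show "Poly_Mapping.keys m \<subseteq> {1..n}" using p q keys_add[of a b] by blast
qed

lemma in_R_power: "in_R n p \<Longrightarrow> in_R n (p ^ k)"
  by (induction k) (auto intro: in_R_mult)

lemma in_R_Var: "i \<in> {1..n} \<Longrightarrow> in_R n (Var i)"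
  by (simp add: in_R_def Var_def)

lemma ideal_R_base: "g \<in> G \<Longrightarrow> g \<in> ideal_R n G"
  unfolding ideal_R_def by (intro CollectI exI[of _ "{g}"] exI[of _ "\<lambda>_. 1"]) simp

lemma ideal_R_superset: "G \<subseteq> ideal_R n G"
  using ideal_R_base by blast

lemma ideal_R_zero: "0 \<in> ideal_R n G"
  unfolding ideal_R_def by (intro CollectI exI[of _ "{}"]) simp

lemma ideal_R_add:
  assumes "p \<in> ideal_R n G" "q \<in> ideal_R n G"
  shows "p + q \<in> ideal_R n G"
proof -
  obtain S1 c1 where 1: "finite S1" "S1 \<subseteq> G" "\<forall>g\<in>S1. in_R n (c1 g)" "p = (\<Sum>g\<in>S1. c1 g * g)"
    using assms(1) unfolding ideal_R_def by blast
  obtain S2 c2 where 2: "finite S2" "S2 \<subseteq> G" "\<forall>g\<in>S2. in_R n (c2 g)" "q = (\<Sum>g\<in>S2. c2 g * g)"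
    using assms(2) unfolding ideal_R_def by blast
  define c where "c g = (if g \<in> S1 then c1 g else 0) + (if g \<in> S2 then c2 g else 0)" for g
  have "(\<Sum>g\<in>S1 \<union> S2. c g * g)
      = (\<Sum>g\<in>S1 \<union> S2. if g \<in> S1 then c1 g * g else 0)
        + (\<Sum>g\<in>S1 \<union> S2. if g \<in> S2 then c2 g * g else 0)"
    unfolding c_def sum.distrib[symmetric] by (rule sum.cong) (auto simp: distrib_right)
  also have "\<dots> = p + q"
    using 1 2 by (simp add: sum.inter_restrict[symmetric] Int_absorb1 Int_absorb2)
  finally have "p + q = (\<Sum>g\<in>S1 \<union> S2. c g * g)" by simp
  moreover have "\<forall>g\<in>S1 \<union> S2. in_R n (c g)"
    using 1 2 unfolding c_def by (auto intro: in_R_add)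
  ultimately show ?thesis
    using 1 2 unfolding ideal_R_def by (intro CollectI exI[of _ "S1 \<union> S2"] exI[of _ c]) auto
qed

lemma ideal_R_mult:
  assumes "in_R n a" "p \<in> ideal_R n G"
  shows "a * p \<in> ideal_R n G"
proof -
  obtain S c where S: "finite S" "S \<subseteq> G" "\<forall>g\<in>S. in_R n (c g)" "p = (\<Sum>g\<in>S. c g * g)"
    using assms(2) unfolding ideal_R_def by blast
  have "a * p = (\<Sum>g\<in>S. (a * c g) * g)"
    using S by (simp add: sum_distrib_left mult.assoc)
  moreover have "\<forall>g\<in>S. in_R n (a * c g)"
    using S assms(1) by (auto intro: in_R_mult)
  ultimately show ?thesis
    using S unfolding ideal_R_def by (intro CollectI exI[of _ S] exI[of _ "\<lambda>g. a * c g"]) auto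
qed

lemma ideal_R_diff:
  fixes G :: "'a::comm_ring_1 mpoly set"
  assumes "p \<in> ideal_R n G" "q \<in> ideal_R n G"
  shows "p - q \<in> ideal_R n G"
  using ideal_R_add[OF assms(1) ideal_R_mult[OF in_R_uminus[OF in_R_1] assms(2)]] by simp

lemma ideal_R_sum:
  "finite A \<Longrightarrow> (\<And>x. x \<in> A \<Longrightarrow> f x \<in> ideal_R n G) \<Longrightarrow> sum f A \<in> ideal_R n G"
  by (induction A rule: finite_induct) (auto intro: ideal_R_zero ideal_R_add)

lemma ideal_R_minimal:
  assumes "G \<subseteq> ideal_R n H"
  shows "ideal_R n G \<subseteq> ideal_R n H"
proof
  fix p assume "p \<in> ideal_R n G"
  then obtain S c where S: "finite S" "S \<subseteq> G" "\<forall>g\<in>S. in_R n (c g)" "p = (\<Sum>g\<in>S. c g * g)"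
    unfolding ideal_R_def by blast
  show "p \<in> ideal_R n H"
    unfolding S(4) using S assms by (intro ideal_R_sum) (auto intro: ideal_R_mult)
qed

lemma ideal_R_eqI: "G \<subseteq> ideal_R n H \<Longrightarrow> H \<subseteq> ideal_R n G \<Longrightarrow> ideal_R n G = ideal_R n H"
  using ideal_R_minimal by blast

lemma ideal_R_cancel_of_nat:
  fixes G :: "'a::field_char_0 mpoly set"
  assumes "of_nat k * p \<in> ideal_R n G" "k > 0"
  shows "p \<in> ideal_R n G"
proof -
  let ?c = "Poly_Mapping.single 0 (inverse (of_nat k)) :: 'a mpoly"
  have "?c * of_nat k = Poly_Mapping.single 0 (inverse (of_nat k) * of_nat k)"
    by (simp flip: single_of_nat add: mult_single)
  also have "\<dots> = 1"
    using assms(2) by simp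
  finally have "p = ?c * (of_nat k * p)"
    by (simp flip: mult.assoc)
  also have "\<dots> \<in> ideal_R n G"
    by (rule ideal_R_mult[OF in_R_const assms(1)])
  finally show ?thesis .
qed

section \<open>Elementary symmetric polynomials\<close>

lemma finite_subsets_card: "finite S \<Longrightarrow> finite {T. T \<subseteq> S \<and> card T = r}"
  by (rule finite_subset[of _ "Pow S"]) auto

lemma esym_0 [simp]:
  assumes "finite S"
  shows "esym 0 S = 1"
proof -
  have "{T. T \<subseteq> S \<and> card T = 0} = {{}}"
    using assms by (auto dest: finite_subset)
  then show ?thesis by (simp add: esym_def)
qed

lemma esym_eq_0:
  assumes "finite S" "card S < r"
  shows "esym r S = 0"
proof -
  have "card T < r" if "T \<subseteq> S" for T
    using card_mono[OF assms(1) that] assms(2) by linarith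
  then have "{T. T \<subseteq> S \<and> card T = r} = {}"
    by blast
  then show ?thesis
    unfolding esym_def by (simp only: sum.empty)
qed

lemma subsets_card_Suc_insert:
  assumes "finite S" "a \<notin> S"
  shows "{T. T \<subseteq> insert a S \<and> card T = Suc r}
       = {T. T \<subseteq> S \<and> card T = Suc r} \<union> insert a ` {T. T \<subseteq> S \<and> card T = r}"
proof (intro equalityI subsetI)
  fix T assume T: "T \<in> {T. T \<subseteq> insert a S \<and> card T = Suc r}"
  then have "finite T" using assms(1) by (auto intro: finite_subset)
  show "T \<in> {T. T \<subseteq> S \<and> card T = Suc r} \<union> insert a ` {T. T \<subseteq> S \<and> card T = r}"
  proof (cases "a \<in> T")
    case True
    then have "T - {a} \<in> {T. T \<subseteq> S \<and> card T = r}" "T = insert a (T - {a})"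
      using T \<open>finite T\<close> by auto
    then show ?thesis by blast
  next
    case False
    then show ?thesis using T by blast
  qed
next
  fix T assume "T \<in> {T. T \<subseteq> S \<and> card T = Suc r} \<union> insert a ` {T. T \<subseteq> S \<and> card T = r}"
  then show "T \<in> {T. T \<subseteq> insert a S \<and> card T = Suc r}"
  proof
    assume "T \<in> insert a ` {T. T \<subseteq> S \<and> card T = r}"
    then obtain U where "U \<subseteq> S" "card U = r" "T = insert a U" by blast
    moreover have "finite U" "a \<notin> U" using calculation assms by (auto dest: finite_subset)
    ultimately show ?thesis by auto
  qed auto
qed

lemma esym_insert:
  assumes "finite S" "a \<notin> S"
  shows "esym (Suc r) (insert a S) = esym (Suc r) S + Var a * (esym r S :: 'a::comm_ring_1 mpoly)"
proof -
  let ?B = "{T. T \<subseteq> S \<and> card T = Suc r}" and ?C = "{T. T \<subseteq> S \<and> card T = r}"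
  have inj: "inj_on (insert a) ?C"
  proof (rule inj_onI)
    fix U V assume "U \<in> ?C" "V \<in> ?C" "insert a U = insert a V"
    moreover have "a \<notin> U" "a \<notin> V" using calculation assms(2) by auto
    ultimately show "U = V" by (metis Diff_insert_absorb)
  qed
  have "esym (Suc r) (insert a S) = (\<Sum>T\<in>?B. \<Prod>i\<in>T. Var i) + (\<Sum>T\<in>insert a ` ?C. \<Prod>i\<in>T. Var i)"
    unfolding esym_def subsets_card_Suc_insert[OF assms]
    using assms by (intro sum.union_disjoint) (auto simp: finite_subsets_card)
  also have "(\<Sum>T\<in>insert a ` ?C. \<Prod>i\<in>T. Var i) = (\<Sum>U\<in>?C. Var a * (\<Prod>i\<in>U. Var i))"
    unfolding sum.reindex[OF inj, unfolded comp_def]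
    using assms by (intro sum.cong refl prod.insert) (auto dest: finite_subset)
  finally show ?thesis
    by (simp add: esym_def sum_distrib_left)
qed

lemma esym_remove:
  assumes "finite S" "x \<in> S"
  shows "esym (Suc r) S = esym (Suc r) (S - {x}) + Var x * (esym r (S - {x}) :: 'a::comm_ring_1 mpoly)"
  using esym_insert[of "S - {x}" x r] assms by (simp add: insert_absorb)

lemma sum_Var_mult_esym_remove:
  "finite S \<Longrightarrow>
    (\<Sum>x\<in>S. Var x * esym r (S - {x})) = of_nat (Suc r) * (esym (Suc r) S :: 'a::comm_ring_1 mpoly)"
proof (induction S arbitrary: r rule: finite_induct)
  case empty
  then show ?case by (simp add: esym_eq_0)
next
  case (insert a S)
  have remove: "insert a S - {x} = insert a (S - {x})" if "x \<in> S" for x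
    using that insert.hyps by auto
  have "(\<Sum>x\<in>insert a S. Var x * esym r (insert a S - {x}))
      = Var a * esym r S + (\<Sum>x\<in>S. Var x * esym r (insert a (S - {x})))"
    using insert.hyps by (simp add: remove)
  also have "\<dots> = of_nat (Suc r) * (esym (Suc r) (insert a S) :: 'a mpoly)"
  proof (cases r)
    case 0
    then show ?thesis
      using insert.hyps insert.IH[of 0] by (simp add: esym_insert)
  next
    case (Suc r')
    have "(\<Sum>x\<in>S. Var x * esym r (insert a (S - {x})))
        = (\<Sum>x\<in>S. Var x * esym (Suc r') (S - {x}) + Var a * (Var x * (esym r' (S - {x}) :: 'a mpoly)))"
      using insert.hyps Suc by (intro sum.cong) (auto simp: esym_insert algebra_simps)
    also have "\<dots> = of_nat (Suc (Suc r')) * esym (Suc (Suc r')) S + Var a * (of_nat (Suc r') * esym (Suc r') S)"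
      by (simp add: sum.distrib sum_distrib_left[symmetric] insert.IH)
    finally show ?thesis
      using insert.hyps Suc by (simp add: esym_insert algebra_simps)
  qed
  finally show ?case .
qed

lemma sum_esym_remove:
  assumes "finite S"
  shows "(\<Sum>x\<in>S. esym r (S - {x})) + of_nat r * esym r S = of_nat (card S) * (esym r S :: 'a::comm_ring_1 mpoly)"
proof (cases r)
  case 0
  then show ?thesis using assms by simp
next
  case (Suc r')
  have "of_nat (card S) * (esym r S :: 'a mpoly) = (\<Sum>x\<in>S. esym r (S - {x}) + Var x * esym r' (S - {x}))"
    using assms Suc by (simp add: esym_remove[of S _ r'] flip: sum_constant)
  also have "\<dots> = (\<Sum>x\<in>S. esym r (S - {x})) + of_nat r * esym r S"
    using sum_Var_mult_esym_remove[OF assms, of r'] Suc by (simp add: sum.distrib)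
  finally show ?thesis by simp
qed

lemma esym_exchange:
  assumes "finite S" "y \<in> S" "z \<notin> S"
  shows "Var z * esym r S - Var y * esym r (insert z (S - {y}))
       = (Var z - Var y) * (esym r (S - {y}) :: 'a::comm_ring_1 mpoly)"
proof (cases r)
  case 0
  then show ?thesis using assms by (simp add: algebra_simps)
next
  case (Suc r')
  have "esym r S = esym r (S - {y}) + Var y * (esym r' (S - {y}) :: 'a mpoly)"
    using esym_remove[OF assms(1,2)] Suc by simp
  moreover have "esym r (insert z (S - {y})) = esym r (S - {y}) + Var z * (esym r' (S - {y}) :: 'a mpoly)"
    using esym_insert[of "S - {y}" z r'] assms Suc by simp
  ultimately show ?thesis
    by (simp add: algebra_simps)
qed

section \<open>Ideals generated by elementary symmetric polynomials\<close>

lemma esymsI: "S \<subseteq> {1..n} \<Longrightarrow> card S = m \<Longrightarrow> esym r S \<in> esyms n r m"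
  unfolding esyms_def by blast

lemma esymsE:
  assumes "p \<in> esyms n r m"
  obtains S where "p = esym r S" "S \<subseteq> {1..n}" "card S = m" "finite S"
  using assms unfolding esyms_def by (auto intro: finite_subset)

lemma esyms_exchange_in_ideal:
  fixes G :: "'a::comm_ring_1 mpoly set"
  assumes I: "esyms n r m \<subseteq> ideal_R n G"
    and S: "S \<subseteq> {1..n}" "card S = m" and "y \<in> S" "z \<in> {1..n}" "z \<notin> S"
  shows "(Var z - Var y) * esym r (S - {y}) \<in> ideal_R n G"
proof -
  have "finite S"
    using S(1) by (rule finite_subset) simp
  then have "card (S - {y}) = m - 1" "0 < m"
    using S(2) \<open>y \<in> S\<close> card_gt_0_iff by auto
  then have "card (insert z (S - {y})) = m"
    using \<open>finite S\<close> \<open>z \<notin> S\<close> by simp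
  then have "esym r (insert z (S - {y})) \<in> ideal_R n G" "esym r S \<in> ideal_R n G"
    using I esymsI[OF S] esymsI[of "insert z (S - {y})" n m r] S(1) \<open>z \<in> {1..n}\<close> by auto
  then have "Var z * esym r S - Var y * esym r (insert z (S - {y})) \<in> ideal_R n G"
    using S(1) \<open>y \<in> S\<close> \<open>z \<in> {1..n}\<close> by (intro ideal_R_diff ideal_R_mult in_R_Var) auto
  then show ?thesis
    unfolding esym_exchange[OF \<open>finite S\<close> \<open>y \<in> S\<close> \<open>z \<notin> S\<close>] .
qed

lemma esyms_Suc_degree_in_ideal:
  fixes G :: "'a::field_char_0 mpoly set"
  assumes I: "esyms n r m \<subseteq> ideal_R n G" and "m < n"
  shows "esyms n (Suc r) m \<subseteq> ideal_R n G"
proof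
  fix p :: "'a mpoly" assume "p \<in> esyms n (Suc r) m"
  then obtain S where S: "p = esym (Suc r) S" "S \<subseteq> {1..n}" "card S = m" "finite S"
    by (rule esymsE)
  obtain z where z: "z \<in> {1..n}" "z \<notin> S"
    using card_mono[OF S(4), of "{1..n}"] S(3) \<open>m < n\<close> by fastforce
  have "(\<Sum>y\<in>S. esym r (S - {y})) = of_nat m * esym r S - of_nat r * (esym r S :: 'a mpoly)"
    using sum_esym_remove[OF S(4), of r] S(3) by (simp add: algebra_simps)
  also have "\<dots> \<in> ideal_R n G"
    using I esymsI[OF S(2,3)] by (intro ideal_R_diff ideal_R_mult in_R_of_nat) auto
  finally have "Var z * (\<Sum>y\<in>S. esym r (S - {y})) \<in> ideal_R n G"
    using z by (intro ideal_R_mult in_R_Var)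
  moreover have "(\<Sum>y\<in>S. (Var z - Var y) * esym r (S - {y})) \<in> ideal_R n G"
    using S z by (intro ideal_R_sum esyms_exchange_in_ideal[OF I]) auto
  ultimately have
    "Var z * (\<Sum>y\<in>S. esym r (S - {y})) - (\<Sum>y\<in>S. (Var z - Var y) * esym r (S - {y})) \<in> ideal_R n G"
    by (rule ideal_R_diff)
  also have "Var z * (\<Sum>y\<in>S. esym r (S - {y})) - (\<Sum>y\<in>S. (Var z - Var y) * esym r (S - {y}))
      = (\<Sum>y\<in>S. Var y * (esym r (S - {y}) :: 'a mpoly))"
    by (simp add: sum_distrib_left sum_subtractf[symmetric] algebra_simps)
  also have "\<dots> = of_nat (Suc r) * esym (Suc r) S"
    by (rule sum_Var_mult_esym_remove[OF S(4)])
  finally show "p \<in> ideal_R n G"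
    unfolding S(1) by (rule ideal_R_cancel_of_nat) simp
qed

lemma esyms_Suc_card_in_ideal:
  fixes G :: "'a::field_char_0 mpoly set"
  assumes I: "\<And>r'. r \<le> r' \<Longrightarrow> esyms n r' m \<subseteq> ideal_R n G" and "r \<le> m" and "r \<le> r'"
  shows "esyms n r' (Suc m) \<subseteq> ideal_R n G"
proof
  fix p :: "'a mpoly" assume "p \<in> esyms n r' (Suc m)"
  then obtain S where S: "p = esym r' S" "S \<subseteq> {1..n}" "card S = Suc m" "finite S"
    by (rule esymsE)
  have in_I: "esym r'' (S - {x}) \<in> ideal_R n G" if "x \<in> S" "r \<le> r''" for x r''
    using I[OF that(2)] esymsI[of "S - {x}" n m r''] S that by auto
  show "p \<in> ideal_R n G"
  proof (cases "r' = r")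
    case True
    have "of_nat (Suc m - r) * esym r S = of_nat (Suc m) * esym r S - of_nat r * (esym r S :: 'a mpoly)"
      using \<open>r \<le> m\<close> by (simp add: of_nat_diff algebra_simps)
    also have "\<dots> = (\<Sum>y\<in>S. esym r (S - {y}))"
      using sum_esym_remove[OF S(4), of r] unfolding S(3) diff_eq_eq by (rule sym)
    also have "\<dots> \<in> ideal_R n G"
      using S(4) in_I by (intro ideal_R_sum) auto
    finally show ?thesis
      unfolding S(1) True by (rule ideal_R_cancel_of_nat) (use \<open>r \<le> m\<close> in simp)
  next
    case False
    then obtain r'' where r'': "r' = Suc r''" "r \<le> r''"
      using \<open>r \<le> r'\<close> by (cases r') auto
    obtain x where x: "x \<in> S"
      using S(3) by fastforce
    have "p = esym r' (S - {x}) + Var x * esym r'' (S - {x})"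
      unfolding S(1) r''(1) by (rule esym_remove[OF S(4) x])
    also have "\<dots> \<in> ideal_R n G"
      using x S r'' in_I by (intro ideal_R_add ideal_R_mult in_R_Var) auto
    finally show ?thesis .
  qed
qed

lemma esyms_in_ideal_upward:
  fixes G :: "'a::field_char_0 mpoly set"
  assumes I: "esyms n r m \<subseteq> ideal_R n G"
    and "r \<le> m" "m < n" "m \<le> m'" "m' \<le> n" "r \<le> r'"
  shows "esyms n r' m' \<subseteq> ideal_R n G"
proof -
  have degree: "esyms n r'' m \<subseteq> ideal_R n G" if "r \<le> r''" for r''
    using that
  proof (induction r'' rule: dec_induct)
    case base
    show ?case by (rule I)
  next
    case (step k)
    then show ?case using esyms_Suc_degree_in_ideal \<open>m < n\<close> by blast
  qed
  have "\<forall>r''\<ge>r. esyms n r'' m' \<subseteq> ideal_R n G"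
    using \<open>m \<le> m'\<close>
  proof (induction m' rule: dec_induct)
    case base
    show ?case using degree by blast
  next
    case (step k)
    have "r \<le> k" using step.hyps(1) \<open>r \<le> m\<close> by simp
    then show ?case
      using step.IH esyms_Suc_card_in_ideal[of r n k G] by simp
  qed
  then show ?thesis using \<open>r \<le> r'\<close> by blast
qed

lemma esyms_card_n: "esyms n r n = {esym r {1..n}}"
proof -
  have "S \<subseteq> {1..n} \<and> card S = n \<longleftrightarrow> S = {1..n}" for S
    using card_subset_eq[of "{1..n}" S] by auto
  then show ?thesis
    unfolding esyms_def by simp
qed

lemma esyms_card_pred:
  assumes "1 \<le> n"
  shows "esyms n r (n - 1) = {esym r ({1..n} - {x}) | x. x \<in> {1..n}}"
proof (intro equalityI subsetI)
  fix p assume "p \<in> esyms n r (n - 1)"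
  then obtain S where S: "p = esym r S" "S \<subseteq> {1..n}" "card S = n - 1" "finite S"
    by (rule esymsE)
  then obtain x where x: "x \<in> {1..n}" "x \<notin> S"
    using card_mono[OF S(4), of "{1..n}"] assms by fastforce
  have "S = {1..n} - {x}"
    using S x assms by (intro card_subset_eq) auto
  then show "p \<in> {esym r ({1..n} - {x}) | x. x \<in> {1..n}}"
    using S(1) x(1) by blast
next
  fix p assume "p \<in> {esym r ({1..n} - {x}) | x. x \<in> {1..n}}"
  then show "p \<in> esyms n r (n - 1)"
    by (auto intro: esymsI)
qed

lemma esyms_1_1: "esyms n 1 1 = {Var i :: 'a::comm_ring_1 mpoly | i. i \<in> {1..n}}"
proof -
  have single: "esym 1 {i} = (Var i :: 'a mpoly)" for i
    using esym_insert[of "{}" i 0, where 'a='a] esym_eq_0[of "{}" 1, where 'a='a] by simp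
  have "esyms n 1 1 = (\<lambda>i. esym 1 {i} :: 'a mpoly) ` {1..n}"
    unfolding esyms_def by (auto simp: card_1_singleton_iff)
  then show ?thesis
    by (auto simp: single[unfolded One_nat_def])
qed

lemma esym_remove_minus_power_in_ideal:
  fixes G :: "'a::comm_ring_1 mpoly set"
  assumes "finite T" "x \<in> T" "x \<in> {1..n}" "\<forall>r'\<in>{1..r}. esym r' T \<in> ideal_R n G"
  shows "esym r (T - {x}) - (- Var x) ^ r \<in> ideal_R n G"
  using assms(4)
proof (induction r)
  case 0
  then show ?case using assms(1) by (simp add: ideal_R_zero)
next
  case (Suc r)
  have "esym (Suc r) (T - {x}) - (- Var x) ^ Suc r
      = esym (Suc r) T - Var x * (esym r (T - {x}) - (- Var x) ^ r)"
    unfolding esym_remove[OF assms(1,2), of r] by (simp add: algebra_simps)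
  also have "\<dots> \<in> ideal_R n G"
    by (rule ideal_R_diff[OF _ ideal_R_mult[OF in_R_Var]]) (use Suc assms(3) in auto)
  finally show ?case .
qed

lemma minus_Var_power_in_ideal_iff:
  "(- Var x) ^ l \<in> ideal_R n G \<longleftrightarrow> Var x ^ l \<in> ideal_R n (G :: 'a::comm_ring_1 mpoly set)"
proof -
  have "in_R n ((-1) ^ l :: 'a mpoly)"
    by (intro in_R_power in_R_uminus in_R_1)
  moreover have "(-1) ^ l * (- Var x) ^ l = (Var x ^ l :: 'a mpoly)"
    "(-1) ^ l * Var x ^ l = ((- Var x) ^ l :: 'a mpoly)"
    by (simp_all only: power_minus[of "Var x"] left_minus_one_mult_self)
  ultimately show ?thesis
    using ideal_R_mult by metis
qed

lemma Var_power_in_ideal: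
  fixes G :: "'a::comm_ring_1 mpoly set"
  assumes "x \<in> {1..n}" "\<forall>r\<in>{1..l}. esym r {1..n} \<in> ideal_R n G"
    and "esym l ({1..n} - {x}) \<in> ideal_R n G"
  shows "Var x ^ l \<in> ideal_R n G"
proof -
  have "esym l ({1..n} - {x}) - (esym l ({1..n} - {x}) - (- Var x) ^ l) \<in> ideal_R n G"
    using assms by (intro ideal_R_diff esym_remove_minus_power_in_ideal) auto
  then show ?thesis
    by (simp add: minus_Var_power_in_ideal_iff)
qed

lemma esym_in_ideal_of_Var_powers:
  fixes G :: "'a::field_char_0 mpoly set"
  assumes "0 < l" "\<forall>r\<in>{1..<l}. esym r {1..n} \<in> ideal_R n G"
    and "\<forall>x\<in>{1..n}. Var x ^ l \<in> ideal_R n G"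
  shows "esym l {1..n} \<in> ideal_R n G"
    and "x \<in> {1..n} \<Longrightarrow> esym l ({1..n} - {x}) \<in> ideal_R n G"
proof -
  obtain l0 where l: "l = Suc l0" using \<open>0 < l\<close> gr0_implies_Suc by blast
  have Var_mult: "Var x * esym l0 ({1..n} - {x}) \<in> ideal_R n G" if x: "x \<in> {1..n}" for x
  proof -
    have "esym l0 ({1..n} - {x}) - (- Var x) ^ l0 \<in> ideal_R n G"
      by (rule esym_remove_minus_power_in_ideal) (use assms(2) x l in auto)
    moreover have "(- Var x) ^ l \<in> ideal_R n G"
      using assms(3) x by (simp add: minus_Var_power_in_ideal_iff)
    moreover have "Var x * esym l0 ({1..n} - {x})
        = Var x * (esym l0 ({1..n} - {x}) - (- Var x) ^ l0) - (- Var x) ^ l"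
      unfolding l by (simp add: algebra_simps)
    ultimately show ?thesis
      using x by (metis ideal_R_diff ideal_R_mult in_R_Var)
  qed
  have "of_nat l * esym l {1..n} = (\<Sum>x\<in>{1..n}. Var x * (esym l0 ({1..n} - {x}) :: 'a mpoly))"
    unfolding l by (rule sum_Var_mult_esym_remove[symmetric]) simp
  also have "\<dots> \<in> ideal_R n G"
    using Var_mult by (intro ideal_R_sum) auto
  finally show full: "esym l {1..n} \<in> ideal_R n G"
    by (rule ideal_R_cancel_of_nat) (rule \<open>0 < l\<close>)
  assume "x \<in> {1..n}"
  then have "esym l ({1..n} - {x}) = esym l {1..n} - Var x * esym l0 ({1..n} - {x})"
    unfolding l by (simp add: esym_remove)
  also have "\<dots> \<in> ideal_R n G"
    by (rule ideal_R_diff[OF full Var_mult[OF \<open>x \<in> {1..n}\<close>]])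
  finally show "esym l ({1..n} - {x}) \<in> ideal_R n G" .
qed

section \<open>Partitions and the De Concini--Procesi generators\<close>

(* lambda'_1 + ... + lambda'_k, the number of cells in columns 0, ..., k - 1 of the diagram *)
definition conj_prefix :: "nat list \<Rightarrow> nat \<Rightarrow> nat" where
  "conj_prefix lam k = (\<Sum>i\<in>{1..k}. conj lam i)"

lemma conj_prefix_0 [simp]: "conj_prefix lam 0 = 0"
  by (simp add: conj_prefix_def)

lemma conj_prefix_Suc: "conj_prefix lam (Suc k) = conj_prefix lam k + conj lam (Suc k)"
  by (simp add: conj_prefix_def)

lemma conj_prefix_mono: "k \<le> k' \<Longrightarrow> conj_prefix lam k \<le> conj_prefix lam k'"
  by (induction k' rule: dec_induct) (auto simp: conj_prefix_Suc)

lemma bcol_conj_prefix: "bcol lam k = conj_prefix lam k + 1 - k"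
  by (simp add: bcol_def conj_prefix_def)

definition DCP_gens :: "nat list \<Rightarrow> nat \<Rightarrow> 'a::comm_ring_1 mpoly set" where
  "DCP_gens lam n = (\<Union>m\<in>{1..n}. \<Union>r\<in>{r. r \<le> m \<and> m < r + delta lam n m}. esyms n r m)"

definition column_gens :: "nat list \<Rightarrow> nat \<Rightarrow> 'a::comm_ring_1 mpoly set" where
  "column_gens lam n = gens_col0 lam n \<union> gens_cols lam n 1 \<union> gens_last lam n"

lemma DCP_ideal_eq: "DCP_ideal lam n = ideal_R n (DCP_gens lam n)"
  by (simp add: DCP_ideal_def DCP_gens_def)

locale young_diagram =
  fixes lam :: "nat list" and n :: nat
  assumes is_partition: "is_partition lam n"
begin

lemma part_antimono:
  assumes "1 \<le> j" "j \<le> j'"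
  shows "part lam j' \<le> part lam j"
proof (cases "j' \<le> length lam \<and> j < j'")
  case True
  have "sorted_wrt (\<ge>) lam"
    using is_partition by (simp add: is_partition_def)
  then have "lam ! (j' - 1) \<le> lam ! (j - 1)"
    by (rule sorted_wrt_nth_less) (use True assms in auto)
  then show ?thesis using True assms by (simp add: part_def)
next
  case False
  then show ?thesis using assms by (auto simp: part_def)
qed

lemma part_pos:
  assumes "j \<in> {1..length lam}"
  shows "1 \<le> part lam j"
proof -
  have "lam ! (j - 1) \<in> set lam"
    by (rule nth_mem) (use assms in auto)
  then show ?thesis
    using is_partition assms by (auto simp: is_partition_def part_def)
qed

lemma sum_part: "(\<Sum>j\<in>{1..length lam}. part lam j) = n"
proof -
  have "(\<Sum>j\<in>{1..length lam}. part lam j) = (\<Sum>j<length lam. lam ! j)"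
    by (rule sum.reindex_bij_witness[of _ Suc "\<lambda>j. j - 1"]) (auto simp: part_def)
  also have "\<dots> = n"
    using is_partition by (simp add: is_partition_def sum_list_sum_nth lessThan_atLeast0)
  finally show ?thesis .
qed

lemma part_le: "part lam j \<le> n"
proof (cases "j \<in> {1..length lam}")
  case True
  then show ?thesis using member_le_sum[of j "{1..length lam}" "part lam"] sum_part by simp
qed (auto simp: part_def)

lemma conj_eq_card: "1 \<le> i \<Longrightarrow> conj lam i = card {j\<in>{1..length lam}. i \<le> part lam j}"
  unfolding conj_def by (rule arg_cong[where f = card]) (auto simp: part_def split: if_splits)

lemma conj_prefix_n: "conj_prefix lam n = n"
proof -
  have "conj_prefix lam n = (\<Sum>i\<in>{1..n}. \<Sum>j\<in>{1..length lam}. if i \<le> part lam j then 1 else 0)"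
    unfolding conj_prefix_def by (intro sum.cong refl) (simp add: conj_eq_card sum.If_cases Int_def)
  also have "\<dots> = (\<Sum>j\<in>{1..length lam}. \<Sum>i\<in>{1..n}. if i \<le> part lam j then 1 else 0)"
    by (rule sum.swap)
  also have "\<dots> = (\<Sum>j\<in>{1..length lam}. part lam j)"
  proof (intro sum.cong refl)
    fix j
    have "{1..n} \<inter> {i. i \<le> part lam j} = {1..part lam j}"
      using part_le[of j] by auto
    then show "(\<Sum>i\<in>{1..n}. if i \<le> part lam j then 1 else 0) = part lam j"
      by (simp add: sum.If_cases)
  qed
  finally show ?thesis using sum_part by simp
qed

lemma conj_prefix_1: "conj_prefix lam 1 = length lam"
proof -
  have "{j\<in>{1..length lam}. 1 \<le> part lam j} = {1..length lam}"
    using part_pos by auto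
  then show ?thesis by (simp add: conj_prefix_def conj_eq_card)
qed

lemma conj_eq_0: "part lam 1 < i \<Longrightarrow> conj lam i = 0"
  using part_antimono[of 1] by (fastforce simp: conj_eq_card)

lemma conj_le_1:
  assumes "part lam 2 < i"
  shows "conj lam i \<le> 1"
proof -
  have "j = 1" if "j \<in> {1..length lam}" "i \<le> part lam j" for j
  proof (rule ccontr)
    assume "j \<noteq> 1"
    then have "part lam j \<le> part lam 2"
      using that(1) by (intro part_antimono) auto
    then show False using assms that(2) by simp
  qed
  then have "{j\<in>{1..length lam}. i \<le> part lam j} \<subseteq> {1}"
    by blast
  then show ?thesis
    using assms card_mono[of "{1::nat}"] by (simp add: conj_eq_card)
qed

lemma conj_pos:
  assumes "1 \<le> i" "i \<le> part lam 1"
  shows "1 \<le> conj lam i"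
proof -
  have "1 \<le> length lam"
    using assms by (auto simp: part_def split: if_splits)
  then have "1 \<in> {j\<in>{1..length lam}. i \<le> part lam j}"
    using assms by simp
  then have "0 < card {j\<in>{1..length lam}. i \<le> part lam j}"
    by (subst card_gt_0_iff) auto
  then show ?thesis
    using assms(1) by (simp add: conj_eq_card)
qed

lemma conj_prefix_eq_n:
  assumes "part lam 1 \<le> k"
  shows "conj_prefix lam k = n"
proof -
  have stable: "conj_prefix lam k' = conj_prefix lam (part lam 1)" if "part lam 1 \<le> k'" for k'
    using that by (induction k' rule: dec_induct) (auto simp: conj_prefix_Suc conj_eq_0)
  show ?thesis
    using stable[OF assms] stable[OF part_le] conj_prefix_n by simp
qed

lemma conj_prefix_le: "conj_prefix lam k \<le> n"
  using conj_prefix_mono[of k "max k (part lam 1)" lam] conj_prefix_eq_n[of "max k (part lam 1)"] by simp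

lemma length_le: "length lam \<le> n"
  using conj_prefix_le[of 1] unfolding conj_prefix_1 .

lemma conj_prefix_less:
  assumes "k < part lam 1"
  shows "conj_prefix lam k < n"
  using conj_prefix_le[of "Suc k"] conj_pos[of "Suc k"] assms by (simp add: conj_prefix_Suc)

lemma le_conj_prefix: "k \<le> part lam 1 \<Longrightarrow> k \<le> conj_prefix lam k"
proof (induction k)
  case (Suc k)
  have "1 \<le> conj lam (Suc k)"
    using Suc.prems by (intro conj_pos) auto
  then show ?case using Suc by (simp add: conj_prefix_Suc)
qed simp

lemma conj_prefix_le_add:
  assumes "part lam 2 \<le> k" "k \<le> j"
  shows "conj_prefix lam j \<le> conj_prefix lam k + (j - k)"
  using assms(2)
proof (induction j rule: dec_induct)
  case (step j)
  then show ?case using conj_le_1[of "Suc j"] assms(1) by (simp add: conj_prefix_Suc)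
qed simp

lemma delta_eq:
  assumes "k \<le> n"
  shows "delta lam n (n - k) = n - conj_prefix lam k"
proof -
  have "conj_prefix lam n = conj_prefix lam k + (\<Sum>i\<in>{Suc k..n}. conj lam i)"
    unfolding conj_prefix_def using sum.ub_add_nat[of 1 k "conj lam" "n - k"] assms by simp
  then show ?thesis
    using assms conj_prefix_n by (simp add: delta_def)
qed

(* With m = n - k, delta_m = n - conj_prefix lam k, so m < r + delta_m says r \<ge> b_k. *)
lemma mem_DCP_gens_iff:
  "g \<in> DCP_gens lam n \<longleftrightarrow>
     (\<exists>k<n. \<exists>r. r \<le> n - k \<and> conj_prefix lam k < r + k \<and> g \<in> esyms n r (n - k))"
proof -
  have condition: "n - k < r + delta lam n (n - k) \<longleftrightarrow> conj_prefix lam k < r + k" if "k \<le> n" for k r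
    using delta_eq[OF that] conj_prefix_le[of k] that by linarith
  show ?thesis
  proof
    assume "g \<in> DCP_gens lam n"
    then obtain m r where "m \<in> {1..n}" "r \<le> m" "m < r + delta lam n m" "g \<in> esyms n r m"
      unfolding DCP_gens_def by blast
    then show "\<exists>k<n. \<exists>r. r \<le> n - k \<and> conj_prefix lam k < r + k \<and> g \<in> esyms n r (n - k)"
      using condition[of "n - m" r] by (intro exI[of _ "n - m"]) auto
  next
    assume "\<exists>k<n. \<exists>r. r \<le> n - k \<and> conj_prefix lam k < r + k \<and> g \<in> esyms n r (n - k)"
    then obtain k r where "k < n" "r \<le> n - k" "conj_prefix lam k < r + k" "g \<in> esyms n r (n - k)"
      by blast
    moreover have "n - k \<in> {1..n}" "n - k < r + delta lam n (n - k)"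
      using calculation condition[of k r] by auto
    ultimately show "g \<in> DCP_gens lam n"
      unfolding DCP_gens_def by blast
  qed
qed

lemma esyms_card_n_subset_DCP_gens:
  assumes "r \<in> {1..n}"
  shows "esyms n r n \<subseteq> DCP_gens lam n"
proof
  fix g assume "g \<in> esyms n r n"
  then show "g \<in> DCP_gens lam n"
    unfolding mem_DCP_gens_iff using assms by (intro exI[of _ 0] exI[of _ r]) auto
qed

lemma column_gens_subset_DCP_gens: "column_gens lam n \<subseteq> DCP_gens lam n"
  unfolding column_gens_def
proof (intro Un_least)
  show "gens_col0 lam n \<subseteq> DCP_gens lam n"
    unfolding gens_col0_def using length_le by (intro UN_least esyms_card_n_subset_DCP_gens) auto
  show "gens_cols lam n 1 \<subseteq> DCP_gens lam n"
    unfolding gens_cols_def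
  proof (intro UN_least subsetI)
    fix k g assume k: "k \<in> {1..<part lam 2}" and g: "g \<in> esyms n (bcol lam k) (n - k)"
    have "k < part lam 1"
      using k part_antimono[of 1 2] by simp
    then have "k \<le> conj_prefix lam k" "conj_prefix lam k < n" "k < n"
      using le_conj_prefix conj_prefix_less part_le[of 1] by auto
    then have "bcol lam k \<le> n - k" "conj_prefix lam k < bcol lam k + k"
      by (auto simp: bcol_conj_prefix)
    then show "g \<in> DCP_gens lam n"
      unfolding mem_DCP_gens_iff using g \<open>k < n\<close> by blast
  qed
  show "gens_last lam n \<subseteq> DCP_gens lam n"
  proof (cases "part lam 2 < part lam 1")
    case True
    define k where "k = part lam 1 - 1"
    have "k < n" "conj_prefix lam k < (n - k) + k"
      using True conj_prefix_less[of k] part_le[of 1] unfolding k_def by auto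
    moreover have "gens_last lam n = esyms n (n - k) (n - k)"
      unfolding gens_last_def k_def using True by (simp only: if_P)
    ultimately show ?thesis
      unfolding subset_iff mem_DCP_gens_iff by blast
  qed (simp add: gens_last_def)
qed

lemma esyms_subset_column_ideal:
  assumes "1 \<le> k" "k < part lam 1" "conj_prefix lam k < r + k"
  shows "esyms n r (n - k) \<subseteq> (ideal_R n (column_gens lam n) :: 'a::field_char_0 mpoly set)"
proof -
  have "k < n" "conj_prefix lam k < n" "k \<le> conj_prefix lam k"
    using assms(2) part_le[of 1] conj_prefix_less le_conj_prefix by auto
  show ?thesis
  proof (cases "k < part lam 2")
    case True
    then have "esyms n (bcol lam k) (n - k) \<subseteq> ideal_R n (column_gens lam n)"
      unfolding column_gens_def gens_cols_def using assms(1) by (intro subset_trans[OF _ ideal_R_superset]) auto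
    then show ?thesis
      by (rule esyms_in_ideal_upward)
        (use assms \<open>k < n\<close> \<open>conj_prefix lam k < n\<close> in \<open>auto simp: bcol_conj_prefix\<close>)
  next
    (* a column of height one: the last column already yields the smaller degree n - (lambda_1 - 1) *)
    case False
    then have last: "esyms n (n - (part lam 1 - 1)) (n - (part lam 1 - 1)) \<subseteq> ideal_R n (column_gens lam n)"
      unfolding column_gens_def gens_last_def using assms(2) by (intro subset_trans[OF _ ideal_R_superset]) auto
    have "n \<le> conj_prefix lam k + (part lam 1 - k)"
      using conj_prefix_le_add[of k "part lam 1"] conj_prefix_eq_n False assms(2) by simp
    then show ?thesis
      by (intro esyms_in_ideal_upward[OF last]) (use assms \<open>k < n\<close> in linarith)+
  qed
qed

lemma DCP_gens_subset_column_ideal: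
  assumes "2 \<le> part lam 1"
  shows "(DCP_gens lam n :: 'a::field_char_0 mpoly set)
           \<subseteq> ideal_R n (column_gens lam n)"
proof
  fix g :: "'a mpoly"
  assume "g \<in> DCP_gens lam n"
  then obtain k r where kr: "k < n" "r \<le> n - k" "conj_prefix lam k < r + k" "g \<in> esyms n r (n - k)"
    unfolding mem_DCP_gens_iff by blast
  consider "k = 0" "r < length lam" | "k = 0" "length lam \<le> r" | "1 \<le> k" "k < part lam 1"
    | "part lam 1 \<le> k" by linarith
  then show "g \<in> ideal_R n (column_gens lam n)"
  proof cases
    case 1
    then show ?thesis
      using kr by (intro ideal_R_base) (auto simp: column_gens_def gens_col0_def)
  next
    case 2
    have "conj_prefix lam 1 < n"
      using conj_prefix_less[of 1] assms by simp
    then have "length lam < n"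
      unfolding conj_prefix_1 .
    have "esyms n (length lam) (n - 1) \<subseteq> ideal_R n (column_gens lam n :: 'a mpoly set)"
      using assms conj_prefix_1 by (intro esyms_subset_column_ideal) auto
    then have "esyms n r n \<subseteq> ideal_R n (column_gens lam n :: 'a mpoly set)"
      by (rule esyms_in_ideal_upward) (use 2 \<open>length lam < n\<close> in auto)
    then show ?thesis using kr 2 by auto
  next
    case 3
    then show ?thesis using kr esyms_subset_column_ideal by blast
  next
    case 4
    then show ?thesis using kr conj_prefix_eq_n by simp
  qed
qed

lemma DCP_ideal_eq_column_gens:
  assumes "2 \<le> part lam 1"
  shows "(DCP_ideal lam n :: 'a::field_char_0 mpoly set)
           = ideal_R n (column_gens lam n)"
  unfolding DCP_ideal_eq using DCP_gens_subset_column_ideal[OF assms] column_gens_subset_DCP_gens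
  by (intro ideal_R_eqI) (auto intro: ideal_R_base)

lemma esym_full_in_DCP_ideal:
  assumes "r \<in> {1..n}"
  shows "esym r {1..n} \<in> DCP_ideal lam n"
  using esyms_card_n_subset_DCP_gens[OF assms] unfolding DCP_ideal_eq esyms_card_n
  by (auto intro: ideal_R_base)

lemma column_gens_eq_first_column:
  assumes "2 \<le> part lam 2"
  shows "column_gens lam n
           = gens_col0 lam n \<union> esyms n (length lam) (n - 1) \<union> gens_cols lam n 2 \<union> gens_last lam n"
proof -
  have "{1..<part lam 2} = insert 1 {2..<part lam 2}"
    using assms by auto
  moreover have "bcol lam 1 = length lam"
    unfolding bcol_conj_prefix conj_prefix_1 by simp
  ultimately show ?thesis
    unfolding column_gens_def gens_cols_def by auto
qed

lemma DCP_ideal_eq_Var_power_gens: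
  assumes "2 \<le> part lam 2"
  shows "(DCP_ideal lam n :: 'a::field_char_0 mpoly set)
           = ideal_R n (gens_col0 lam n \<union> {Var i ^ bcol lam 1 | i. i \<in> {1..n}}
                          \<union> gens_cols lam n 2 \<union> gens_last lam n)"
    (is "_ = ideal_R n ?G")
proof -
  define l where "l = length lam"
  have "2 \<le> part lam 1"
    using assms part_antimono[of 1 2] by simp
  then have "1 \<le> n" "l \<le> n" "0 < l"
    using part_le[of 1] length_le by (auto simp: l_def part_def split: if_splits)
  have bcol: "bcol lam 1 = l"
    unfolding bcol_conj_prefix conj_prefix_1 l_def by simp
  note column_gens = column_gens_eq_first_column[OF assms, folded l_def]
  note DCP = DCP_ideal_eq_column_gens[OF \<open>2 \<le> part lam 1\<close>]
  have "column_gens lam n \<subseteq> ideal_R n ?G"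
  proof -
    have "\<forall>r\<in>{1..<l}. (esym r {1..n} :: 'a mpoly) \<in> ideal_R n ?G"
      unfolding l_def gens_col0_def esyms_card_n by (auto intro: ideal_R_base)
    moreover have "\<forall>x\<in>{1..n}. (Var x ^ l :: 'a mpoly) \<in> ideal_R n ?G"
      unfolding bcol by (intro ballI ideal_R_base) blast
    ultimately have "esyms n l (n - 1) \<subseteq> ideal_R n ?G"
      unfolding esyms_card_pred[OF \<open>1 \<le> n\<close>]
      using esym_in_ideal_of_Var_powers(2)[OF \<open>0 < l\<close>] by blast
    then show ?thesis
      unfolding column_gens by (auto intro: ideal_R_base)
  qed
  moreover have "?G \<subseteq> ideal_R n (column_gens lam n)"
  proof -
    have "(esym r {1..n} :: 'a mpoly) \<in> DCP_ideal lam n" if "r \<in> {1..n}" for r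
      using that by (rule esym_full_in_DCP_ideal)
    then have "(esym r {1..n} :: 'a mpoly) \<in> ideal_R n (column_gens lam n)" if "r \<in> {1..n}" for r
      using that unfolding DCP by blast
    moreover have "(esym l ({1..n} - {x}) :: 'a mpoly) \<in> ideal_R n (column_gens lam n)" if "x \<in> {1..n}" for x
      using that unfolding column_gens esyms_card_pred[OF \<open>1 \<le> n\<close>] by (auto intro: ideal_R_base)
    ultimately have "(Var x ^ l :: 'a mpoly) \<in> ideal_R n (column_gens lam n)" if "x \<in> {1..n}" for x
      using that \<open>l \<le> n\<close> by (intro Var_power_in_ideal) auto
    then show ?thesis
      unfolding column_gens bcol by (auto intro: ideal_R_base)
  qed
  ultimately show ?thesis
    unfolding DCP by (rule ideal_R_eqI)
qed

lemma DCP_gens_one_column: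
  assumes "part lam 1 = 1"
  shows "(DCP_gens lam n :: 'a::comm_ring_1 mpoly set) = gens_col0 lam n \<union> esyms n n n"
proof -
  have "length lam = n"
    using conj_prefix_eq_n[of 1] assms conj_prefix_1 by simp
  moreover have "1 \<le> length lam"
    using assms by (auto simp: part_def split: if_splits)
  ultimately have "{1..n} = insert n {1..<length lam}"
    by auto
  then have "gens_col0 lam n \<union> esyms n n n = (\<Union>r\<in>{1..n}. esyms n r n :: 'a mpoly set)"
    unfolding gens_col0_def by auto
  moreover have "DCP_gens lam n = (\<Union>r\<in>{1..n}. esyms n r n :: 'a mpoly set)"
  proof
    show "DCP_gens lam n \<subseteq> (\<Union>r\<in>{1..n}. esyms n r n)"
    proof
      fix g assume "g \<in> DCP_gens lam n"
      then obtain k r where "k < n" "r \<le> n - k" "conj_prefix lam k < r + k" "g \<in> esyms n r (n - k)"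
        unfolding mem_DCP_gens_iff by blast
      moreover have "k = 0"
        using calculation conj_prefix_eq_n[of k] assms by (cases "k = 0") auto
      ultimately show "g \<in> (\<Union>r\<in>{1..n}. esyms n r n)" by auto
    qed
  qed (use esyms_card_n_subset_DCP_gens in blast)
  ultimately show ?thesis by (simp only:)
qed

lemma DCP_ideal_eq_one_column:
  assumes "part lam 1 = 1"
  shows "DCP_ideal lam n = ideal_R n (gens_col0 lam n \<union> esyms n n n)"
  unfolding DCP_ideal_eq DCP_gens_one_column[OF assms] ..

lemma DCP_ideal_one_row:
  assumes "lam = [n]"
  shows "(DCP_ideal lam n :: 'a::field_char_0 mpoly set) = ideal_R n {Var i | i. i \<in> {1..n}}"
proof -
  have "1 \<le> n"
    using is_partition assms by (simp add: is_partition_def)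
  have "(DCP_ideal lam n :: 'a mpoly set) = ideal_R n (esyms n 1 1)"
  proof (cases "n = 1")
    case True
    then have "part lam 1 = 1"
      using assms by (simp add: part_def)
    then show ?thesis
      unfolding DCP_ideal_eq_one_column[OF \<open>part lam 1 = 1\<close>] using True assms by (simp add: gens_col0_def)
  next
    case False
    then have "2 \<le> part lam 1"
      using assms \<open>1 \<le> n\<close> by (simp add: part_def)
    show ?thesis
      unfolding DCP_ideal_eq_column_gens[OF \<open>2 \<le> part lam 1\<close>] column_gens_def
      using False assms \<open>1 \<le> n\<close> by (simp add: gens_col0_def gens_cols_def gens_last_def part_def)
  qed
  then show ?thesis
    by (simp only: esyms_1_1)
qed

end

theorem mainTheorem5:
  fixes lam :: "nat list" and n :: nat
  assumes "1 \<le> n" and "is_partition lam n"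
  shows "(part lam 1 \<ge> 2 \<longrightarrow>
            (DCP_ideal lam n :: 'a::field_char_0 mpoly set)
              = ideal_R n (gens_col0 lam n \<union> gens_cols lam n 1 \<union> gens_last lam n))
       \<and> (part lam 1 \<ge> 2 \<and> part lam 2 \<ge> 2 \<longrightarrow>
            (DCP_ideal lam n :: 'a mpoly set)
              = ideal_R n (gens_col0 lam n \<union> {Var i ^ bcol lam 1 | i. i \<in> {1..n}}
                             \<union> gens_cols lam n 2 \<union> gens_last lam n))
       \<and> (part lam 1 = 1 \<longrightarrow>
            (DCP_ideal lam n :: 'a mpoly set)
              = ideal_R n (gens_col0 lam n \<union> esyms n n n))
       \<and> (lam = [n] \<longrightarrow>
            (DCP_ideal lam n :: 'a mpoly set) = ideal_R n {Var i | i. i \<in> {1..n}})"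
proof -
  interpret young_diagram lam n
    by unfold_locales (rule assms(2))
  show ?thesis
    by (intro conjI impI; (elim conjE)?;
        rule DCP_ideal_eq_column_gens[unfolded column_gens_def] DCP_ideal_eq_Var_power_gens
          DCP_ideal_eq_one_column DCP_ideal_one_row; assumption)
qed

end
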